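(* Let $(S,\mathcal{S})$ be a measurable space, let $\mathcal{E}\subseteq \mathcal{P}(S)$ be a $\cap$-stable collection with $\sigma(\mathcal{E})=\mathcal{S}$, and let $\pi_{1},\pi_{2}:\Omega\to C(S)$ be two cr-sets. Suppose $\pi_{1}$ and $\pi_{2}$ are both $\sigma$-finite on $\mathcal{E}$ and satisfy \[ P_{\pi_{1}}(N_{A_{1}}=k_{1},\ldots, N_{A_{n}}=k_{n})=P_{\pi_{2}}(N_{A_{1}}=k_{1},\ldots, N_{A_{n}}=k_{n})\] for all $n\in \mathbb{N}$, all $A_{1},\ldots,A_{n}\in\mathcal{E}$ and all $k_{1},\ldots,k_{n}\in\mathbb{N}_{0}\cup\{\infty\}$. Then $P_{\pi_{1}}=P_{\pi_{2}}$.
   Context: $(\Omega,\mathcal{F},P)$ is a probability space. $C(S)$ denotes the set of all countable (finite or denumerable) subsets of $S$. For $A\subseteq S$, $N_A:C(S)\to\mathbb{N}_0\cup\{\infty\}$, $M\mapsto |A\cap M|$. $\mathcal{C}(\mathcal{S})$ is the smallest $\sigma$-field on $C(S)$ making all $N_A$, $A\in\mathcal{S}$, measurable. A countable random set (cr-set) is an $\mathcal{F}$-$\mathcal{C}(\mathcal{S})$ measurable map $\pi:\Omega\to C(S)$; $P_\pi$ denotes its law on $(C(S),\mathcal{C}(\mathcal{S}))$. A map $\tau:\Omega\to C(S)$ is finite if $|\tau(\omega)|<\infty$ for all $\omega$, and is $\sigma$-finite on $\mathcal{E}\subseteq\mathcal{S}$ if there are $A_n\in\mathcal{E}$, $n\in\mathbb{N}$,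 with $S=\bigcup_n A_n$ such that $|\tau(\omega)\cap A_n|<\infty$ for all $\omega\in\Omega$ and all $n$. *)

theory Defs
  imports "HOL-Probability.Probability"
begin

definition cset_space :: "'s set \<Rightarrow> 's set set" where
  "cset_space S = {M. M \<subseteq> S \<and> countable M}"

definition cnt :: "'s set \<Rightarrow> 's set \<Rightarrow> enat" where
  "cnt A M = (if finite (A \<inter> M) then enat (card (A \<inter> M)) else \<infinity>)"

definition cset_measure :: "'s measure \<Rightarrow> 's set measure" where
  "cset_measure Sm = sigma (cset_space (space Sm))
     (\<Union>A\<in>sets Sm. {cnt A -` B \<inter> cset_space (space Sm) | B. B \<subseteq> (UNIV :: enat set)})"

definition cr_set :: "'w measure \<Rightarrow> 's measure \<Rightarrow> ('w \<Rightarrow> 's set) \<Rightarrow> bool" where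
  "cr_set M Sm \<pi> \<longleftrightarrow> \<pi> \<in> measurable M (cset_measure Sm)"

definition cr_law :: "'w measure \<Rightarrow> 's measure \<Rightarrow> ('w \<Rightarrow> 's set) \<Rightarrow> 's set measure" where
  "cr_law M Sm \<pi> = distr M (cset_measure Sm) \<pi>"

definition sigma_finite_on :: "'w measure \<Rightarrow> 's set \<Rightarrow> 's set set \<Rightarrow> ('w \<Rightarrow> 's set) \<Rightarrow> bool" where
  "sigma_finite_on M S E \<tau> \<longleftrightarrow>
     (\<exists>A :: nat \<Rightarrow> 's set. range A \<subseteq> E \<and> S = (\<Union>n. A n) \<and>
        (\<forall>\<omega>\<in>space M. \<forall>n. finite (\<tau> \<omega> \<inter> A n)))"

end

theory Submission
  imports Defs
begin

text \<open>
  The cylinder sets {N_A1 = k1, ..., N_An = kn} with all Ai in E form an \<inter>-stable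
  family, so by uniqueness of measures the two laws agree on the \<sigma>-algebra they
  generate, the cylinder \<sigma>-algebra. This \<sigma>-algebra is a priori smaller than the
  one of C(S), which makes N_A measurable for every A in \<sigma>(E). The gap is closed
  by \<sigma>-finiteness: choosing a common cover C j \<in> E on which both random sets are
  finite, both laws live on the set L of configurations that are finite on each
  C j. On L the count A \<mapsto> |A \<inter> X| is a measure, and a Dynkin argument over
  \<sigma>(E) shows that N_A restricted to L is cylinder-measurable for all A. Hence
  the two \<sigma>-algebras have the same trace on L, and the laws coincide.
\<close>

text \<open>Number of points of X in A, as an extended non-negative real. Unlike cnt it
  is countably additive in A, which is what the Dynkin argument below needs.\<close>

definition points_in :: "'s set \<Rightarrow> 's set \<Rightarrow> ennreal" where
  "points_in A X = emeasure (count_space UNIV) (A \<inter> X)"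

lemma points_in_cnt: "points_in A X = ennreal_of_enat (cnt A X)"
  unfolding points_in_def cnt_def by (simp add: emeasure_count_space ennreal_of_enat_enat)

lemma points_in_UN:
  assumes "disjoint_family F"
  shows "points_in (\<Union>i. F i) X = (\<Sum>i. points_in (F i) X)"
proof -
  have "(\<Union>i. F i) \<inter> X = (\<Union>i. F i \<inter> X)" by auto
  moreover have "disjoint_family (\<lambda>i. F i \<inter> X)"
    using assms by (auto simp: disjoint_family_on_def)
  ultimately show ?thesis
    unfolding points_in_def by (simp add: suminf_emeasure)
qed

lemma points_in_Diff:
  assumes "finite (D \<inter> X)"
  shows "points_in (D - A) X = points_in D X - points_in (A \<inter> D) X"
proof -
  have split: "(D - A) \<inter> X = D \<inter> X - A \<inter> D \<inter> X" by auto
  have "finite (A \<inter> D \<inter> X)"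
    using assms by (rule finite_subset[rotated]) auto
  then have "emeasure (count_space UNIV) (A \<inter> D \<inter> X) \<noteq> \<infinity>"
    by (simp add: emeasure_count_space)
  then have "emeasure (count_space UNIV) (D \<inter> X - A \<inter> D \<inter> X)
      = emeasure (count_space UNIV) (D \<inter> X) - emeasure (count_space UNIV) (A \<inter> D \<inter> X)"
    by (rule emeasure_Diff) auto
  with split show ?thesis
    unfolding points_in_def by simp
qed

lemma space_cset_measure: "space (cset_measure Sm) = cset_space (space Sm)"
  unfolding cset_measure_def by (rule space_measure_of) (auto simp: cset_space_def)

lemma sets_cset_measure:
  "sets (cset_measure Sm) = sigma_sets (cset_space (space Sm))
     (\<Union>A\<in>sets Sm. {cnt A -` B \<inter> cset_space (space Sm) | B. B \<subseteq> (UNIV :: enat set)})"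
  unfolding cset_measure_def by (rule sets_measure_of) (auto simp: cset_space_def)

lemma cnt_level_set_measurable:
  assumes "A \<in> sets Sm"
  shows "{X \<in> space (cset_measure Sm). cnt A X = k} \<in> sets (cset_measure Sm)"
proof -
  have "{X \<in> space (cset_measure Sm). cnt A X = k} = cnt A -` {k} \<inter> cset_space (space Sm)"
    by (auto simp: space_cset_measure)
  also have "\<dots> \<in> sets (cset_measure Sm)"
    unfolding sets_cset_measure by (rule sigma_sets.Basic) (use assms in blast)
  finally show ?thesis .
qed

text \<open>The cylinders with A ranging over E generate the cylinder \<sigma>-algebra on C(S);
  the hypothesis of the theorem says that both laws agree on them.\<close>

definition cylinder :: "'s measure \<Rightarrow> ('s set \<times> enat) set \<Rightarrow> 's set set" where
  "cylinder Sm F = {X \<in> space (cset_measure Sm). \<forall>p\<in>F. cnt (fst p) X = snd p}"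

definition cylinders :: "'s measure \<Rightarrow> 's set set \<Rightarrow> 's set set set" where
  "cylinders Sm E = {cylinder Sm F | F. finite F \<and> fst ` F \<subseteq> E}"

definition cylinder_measure :: "'s measure \<Rightarrow> 's set set \<Rightarrow> 's set measure" where
  "cylinder_measure Sm E = sigma (space (cset_measure Sm)) (cylinders Sm E)"

lemma cylinder_indexed:
  assumes "finite F"
  obtains A k where "\<forall>i<card F. (A i, k i) \<in> F"
    and "cylinder Sm F = {X \<in> space (cset_measure Sm). \<forall>i<card F. cnt (A i) X = k i}"
proof -
  define n where "n = card F"
  obtain h where h: "bij_betw h {0..<n} F"
    using ex_bij_betw_nat_finite[OF assms] unfolding n_def by blast
  then have "F = h ` {..<n}" by (auto simp: bij_betw_def atLeast0LessThan)
  then have "cylinder Sm F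
      = {X \<in> space (cset_measure Sm). \<forall>i<n. cnt (fst (h i)) X = snd (h i)}"
    unfolding cylinder_def by auto
  moreover have "\<forall>i<n. (fst (h i), snd (h i)) \<in> F"
    using h by (auto simp: bij_betw_def)
  ultimately show ?thesis
    using that[of "\<lambda>i. fst (h i)" "\<lambda>i. snd (h i)"] unfolding n_def by blast
qed

lemma cylinders_Int_stable: "Int_stable (cylinders Sm E)"
proof (rule Int_stableI)
  fix Z Z' assume "Z \<in> cylinders Sm E" "Z' \<in> cylinders Sm E"
  then obtain F F' where "Z = cylinder Sm F" "Z' = cylinder Sm F'"
    "finite F" "fst ` F \<subseteq> E" "finite F'" "fst ` F' \<subseteq> E"
    unfolding cylinders_def by blast
  moreover have "cylinder Sm F \<inter> cylinder Sm F' = cylinder Sm (F \<union> F')"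
    unfolding cylinder_def by auto
  ultimately show "Z \<inter> Z' \<in> cylinders Sm E"
    unfolding cylinders_def by blast
qed

lemma cylinders_Pow: "cylinders Sm E \<subseteq> Pow (space (cset_measure Sm))"
  unfolding cylinders_def cylinder_def by auto

lemma space_in_cylinders: "space (cset_measure Sm) \<in> cylinders Sm E"
proof -
  have "space (cset_measure Sm) = cylinder Sm {}" by (simp add: cylinder_def)
  then show ?thesis unfolding cylinders_def by blast
qed

lemma cylinders_measurable:
  assumes "E \<subseteq> sets Sm"
  shows "cylinders Sm E \<subseteq> sets (cset_measure Sm)"
proof
  fix Z assume "Z \<in> cylinders Sm E"
  then obtain F where F: "Z = cylinder Sm F" "finite F" "fst ` F \<subseteq> E"
    unfolding cylinders_def by blast
  have "Z = space (cset_measure Sm) -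
      (\<Union>p\<in>F. space (cset_measure Sm) - {X \<in> space (cset_measure Sm). cnt (fst p) X = snd p})"
    unfolding F(1) cylinder_def by auto
  also have "\<dots> \<in> sets (cset_measure Sm)"
    using F assms by (intro sets.compl_sets sets.finite_UN) (auto intro!: cnt_level_set_measurable)
  finally show "Z \<in> sets (cset_measure Sm)" .
qed

lemma space_cylinder_measure: "space (cylinder_measure Sm E) = space (cset_measure Sm)"
  unfolding cylinder_measure_def using cylinders_Pow by (rule space_measure_of)

lemma sets_cylinder_measure:
  "sets (cylinder_measure Sm E) = sigma_sets (space (cset_measure Sm)) (cylinders Sm E)"
  unfolding cylinder_measure_def using cylinders_Pow by (rule sets_measure_of)

lemma cylinder_measure_coarser:
  assumes "E \<subseteq> sets Sm"
  shows "sets (cylinder_measure Sm E) \<subseteq> sets (cset_measure Sm)"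
  unfolding sets_cylinder_measure
  using cylinders_measurable[OF assms] by (rule sets.sigma_sets_subset)

lemma cnt_measurable_cylinder_measure:
  assumes "D \<in> E"
  shows "cnt D \<in> measurable (cylinder_measure Sm E) (count_space UNIV)"
proof (subst measurable_count_space_eq_countable, simp, intro conjI ballI)
  fix a :: enat
  have "cnt D -` {a} \<inter> space (cylinder_measure Sm E) = cylinder Sm {(D, a)}"
    by (auto simp: cylinder_def space_cylinder_measure)
  also have "\<dots> \<in> sets (cylinder_measure Sm E)"
    using assms unfolding sets_cylinder_measure cylinders_def by (intro sigma_sets.Basic) auto
  finally show "cnt D -` {a} \<inter> space (cylinder_measure Sm E) \<in> sets (cylinder_measure Sm E)" .
qed simp

text \<open>The configurations meeting every C j in finitely many points. For a cover C
  witnessing \<sigma>-finiteness, the random set takes all its values here.\<close>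

definition locally_finite_sets :: "'s measure \<Rightarrow> (nat \<Rightarrow> 's set) \<Rightarrow> 's set set" where
  "locally_finite_sets Sm C = {X \<in> space (cset_measure Sm). \<forall>j. finite (C j \<inter> X)}"

lemma locally_finite_sets_measurable:
  assumes "range C \<subseteq> E"
  shows "locally_finite_sets Sm C \<in> sets (cylinder_measure Sm E)"
proof -
  let ?N = "cylinder_measure Sm E"
  have "locally_finite_sets Sm C = space ?N \<inter> (\<Inter>j. cnt (C j) -` (UNIV - {\<infinity>}) \<inter> space ?N)"
    by (auto simp: locally_finite_sets_def space_cylinder_measure cnt_def)
  also have "\<dots> \<in> sets ?N"
    using assms cnt_measurable_cylinder_measure[of "C _" E Sm]
    by (intro sets.Int sets.top sets.countable_INT) (auto intro: measurable_sets)
  finally show ?thesis .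
qed

lemma points_in_measurable_cylinder_measure:
  assumes "D \<in> E"
  shows "points_in D \<in> borel_measurable (restrict_space (cylinder_measure Sm E) L)"
proof -
  have "(\<lambda>X. ennreal_of_enat (cnt D X)) \<in> borel_measurable (cylinder_measure Sm E)"
    using cnt_measurable_cylinder_measure[OF assms]
    by (rule measurable_compose) (simp add: measurable_count_space_eq1)
  then show ?thesis
    unfolding points_in_cnt[abs_def] by (rule measurable_restrict_space1)
qed

text \<open>Finiteness is needed to pass to complements, since D - A is counted as a
  difference.\<close>

lemma points_in_Int_measurable:
  assumes E: "E \<subseteq> Pow \<Omega>" "Int_stable E" and D: "D \<in> E"
    and finite: "\<And>X. X \<in> L \<Longrightarrow> finite (D \<inter> X)"
    and A: "A \<in> sigma_sets \<Omega> E"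
  shows "points_in (A \<inter> D) \<in> borel_measurable (restrict_space (cylinder_measure Sm E) L)"
  using E(2,1) A
proof (induction rule: sigma_sets_induct_disjoint)
  case (basic A)
  then show ?case
    using D E(2) by (intro points_in_measurable_cylinder_measure) (auto simp: Int_stable_def)
next
  case empty
  then show ?case by (simp add: points_in_def)
next
  case (compl A)
  have Diff: "points_in ((\<Omega> - A) \<inter> D) X = points_in D X - points_in (A \<inter> D) X"
    if "X \<in> space (restrict_space (cylinder_measure Sm E) L)" for X
  proof -
    have "(\<Omega> - A) \<inter> D = D - A" using D E(1) by auto
    moreover have "finite (D \<inter> X)" using that finite by (simp add: space_restrict_space)
    ultimately show ?thesis using points_in_Diff by metis
  qed
  have "(\<lambda>X. points_in D X - points_in (A \<inter> D) X)
      \<in> borel_measurable (restrict_space (cylinder_measure Sm E) L)"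
    using points_in_measurable_cylinder_measure[OF D] compl.IH
    by (rule borel_measurable_minus_ennreal)
  then show ?case by (simp add: Diff cong: measurable_cong)
next
  case (union F)
  have "disjoint_family (\<lambda>i. F i \<inter> D)"
    using union.hyps(1) by (auto simp: disjoint_family_on_def)
  moreover have "(\<Union>i. F i) \<inter> D = (\<Union>i. F i \<inter> D)" by auto
  ultimately have "points_in ((\<Union>i. F i) \<inter> D) X = (\<Sum>i. points_in (F i \<inter> D) X)" for X
    using points_in_UN by metis
  then show ?case using union.IH by (simp add: borel_measurable_suminf_order)
qed

text \<open>Gluing the Dynkin step over the disjointed pieces of the cover C: on the
  locally finite configurations, N_A is cylinder-measurable for every
  measurable A.\<close>

lemma points_in_measurable_locally_finite:
  assumes gen: "sigma_sets (space Sm) E = sets Sm" and E: "Int_stable E"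
    and C: "range C \<subseteq> E" "(\<Union>j. C j) = space Sm"
    and A: "A \<in> sets Sm"
  shows "points_in A
    \<in> borel_measurable (restrict_space (cylinder_measure Sm E) (locally_finite_sets Sm C))"
proof -
  let ?R = "restrict_space (cylinder_measure Sm E) (locally_finite_sets Sm C)"
  define F where "F j = A \<inter> disjointed C j" for j
  have E_Pow: "E \<subseteq> Pow (space Sm)"
    using gen sets.space_closed[of Sm] sigma_sets.Basic[of _ E "space Sm"] by auto
  have "disjoint_family F"
    using disjoint_family_disjointed[of C] unfolding F_def by (auto simp: disjoint_family_on_def)
  have "range C \<subseteq> sets Sm"
    using C(1) gen sigma_sets.Basic[of _ E "space Sm"] by auto
  then have F_sets: "F j \<in> sigma_sets (space Sm) E" for j
    using sets.range_disjointed_sets[of C Sm] A gen unfolding F_def by auto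
  have sum: "points_in A X = (\<Sum>j. points_in (F j \<inter> C j) X)" if "X \<in> space ?R" for X
  proof -
    have "X \<subseteq> space Sm"
      using that by (auto simp: space_restrict_space locally_finite_sets_def
          space_cylinder_measure space_cset_measure cset_space_def)
    then have "A \<inter> X = (\<Union>j. F j) \<inter> X"
      using C(2) UN_disjointed_eq[of C] unfolding F_def by blast
    moreover have "F j \<inter> C j = F j" for j
      unfolding F_def disjointed_def by auto
    ultimately show ?thesis
      using points_in_UN[OF \<open>disjoint_family F\<close>] by (simp add: points_in_def)
  qed
  have "(\<lambda>X. \<Sum>j. points_in (F j \<inter> C j) X) \<in> borel_measurable ?R"
  proof (rule borel_measurable_suminf_order)
    fix j
    show "points_in (F j \<inter> C j) \<in> borel_measurable ?R"
      using E_Pow E C(1) F_sets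
      by (intro points_in_Int_measurable) (auto simp: locally_finite_sets_def)
  qed
  then show ?thesis by (simp add: sum cong: measurable_cong)
qed

lemma cnt_level_set_locally_finite:
  assumes gen: "sigma_sets (space Sm) E = sets Sm" and E: "Int_stable E"
    and C: "range C \<subseteq> E" "(\<Union>j. C j) = space Sm"
    and A: "A \<in> sets Sm"
  shows "{X \<in> locally_finite_sets Sm C. cnt A X = k} \<in> sets (cylinder_measure Sm E)"
proof -
  let ?N = "cylinder_measure Sm E" and ?L = "locally_finite_sets Sm C"
  let ?R = "restrict_space ?N ?L"
  have L: "?L \<in> sets ?N" using C(1) by (rule locally_finite_sets_measurable)
  have L_space: "?L \<subseteq> space ?N"
    by (auto simp: locally_finite_sets_def space_cylinder_measure)
  have "{X \<in> ?L. cnt A X = k} = points_in A -` {ennreal_of_enat k} \<inter> space ?R"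
    using L_space by (auto simp: points_in_cnt ennreal_of_enat_inj space_restrict_space)
  also have "\<dots> \<in> sets ?R"
    using points_in_measurable_locally_finite[OF gen E C A] by (rule measurable_sets) simp
  finally show ?thesis
    using L L_space by (simp add: sets_restrict_space_iff Int_absorb2)
qed

lemma trace_on_locally_finite_sets:
  assumes gen: "sigma_sets (space Sm) E = sets Sm" and E: "Int_stable E"
    and C: "range C \<subseteq> E" "(\<Union>j. C j) = space Sm"
    and Y: "Y \<in> sets (cset_measure Sm)"
  shows "Y \<inter> locally_finite_sets Sm C \<in> sets (cylinder_measure Sm E)"
proof -
  let ?N = "cylinder_measure Sm E" and ?L = "locally_finite_sets Sm C"
    and ?\<Omega> = "cset_space (space Sm)"
  have L: "?L \<in> sets ?N" using C(1) by (rule locally_finite_sets_measurable)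
  have L_space: "?L \<subseteq> ?\<Omega>"
    by (auto simp: locally_finite_sets_def space_cset_measure)
  from Y have "Y \<in> sigma_sets ?\<Omega>
      (\<Union>A\<in>sets Sm. {cnt A -` B \<inter> ?\<Omega> | B. B \<subseteq> (UNIV :: enat set)})"
    by (simp add: sets_cset_measure)
  then show ?thesis
  proof (induction rule: sigma_sets.induct)
    case (Basic Z)
    then obtain A B where A: "A \<in> sets Sm" and Z: "Z = cnt A -` B \<inter> ?\<Omega>" by blast
    have "Z \<inter> ?L = (\<Union>k\<in>B. {X \<in> ?L. cnt A X = k})"
      using L_space unfolding Z by auto
    also have "\<dots> \<in> sets ?N"
      using cnt_level_set_locally_finite[OF gen E C A] by (intro sets.countable_UN') auto
    finally show ?case .
  next
    case Empty
    then show ?case by simp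
  next
    case (Compl Z)
    have "(?\<Omega> - Z) \<inter> ?L = ?L - Z \<inter> ?L" using L_space by auto
    then show ?case using Compl.IH L by auto
  next
    case (Union Z)
    have "(\<Union>i. Z i) \<inter> ?L = (\<Union>i. Z i \<inter> ?L)" by auto
    also have "\<dots> \<in> sets ?N" using Union.IH by (intro sets.countable_UN) auto
    finally show ?case .
  qed
qed

text \<open>Two random sets which are \<sigma>-finite on an \<inter>-stable E admit a common
  witnessing sequence, obtained by intersecting the two given ones.\<close>

lemma sigma_finite_on_common_sequence:
  fixes \<tau>1 \<tau>2 :: "'w \<Rightarrow> 's set"
  assumes E: "Int_stable E"
    and \<tau>1: "sigma_finite_on M S E \<tau>1" and \<tau>2: "sigma_finite_on M S E \<tau>2"
  obtains C :: "nat \<Rightarrow> 's set" where "range C \<subseteq> E" "(\<Union>j. C j) = S"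
    "\<And>\<omega> j. \<omega> \<in> space M \<Longrightarrow> finite (C j \<inter> \<tau>1 \<omega>)"
    "\<And>\<omega> j. \<omega> \<in> space M \<Longrightarrow> finite (C j \<inter> \<tau>2 \<omega>)"
proof -
  obtain A1 :: "nat \<Rightarrow> 's set" where A1: "range A1 \<subseteq> E" "S = (\<Union>n. A1 n)"
    "\<forall>\<omega>\<in>space M. \<forall>n. finite (\<tau>1 \<omega> \<inter> A1 n)"
    using \<tau>1 unfolding sigma_finite_on_def by blast
  obtain A2 :: "nat \<Rightarrow> 's set" where A2: "range A2 \<subseteq> E" "S = (\<Union>n. A2 n)"
    "\<forall>\<omega>\<in>space M. \<forall>n. finite (\<tau>2 \<omega> \<inter> A2 n)"
    using \<tau>2 unfolding sigma_finite_on_def by blast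
  define C where "C j = A1 (fst (prod_decode j)) \<inter> A2 (snd (prod_decode j))" for j
  have "range C \<subseteq> E"
    using A1(1) A2(1) E unfolding C_def Int_stable_def by auto
  moreover have "(\<Union>j. C j) = S"
  proof
    show "S \<subseteq> (\<Union>j. C j)"
    proof
      fix x assume "x \<in> S"
      then have "x \<in> (\<Union>n. A1 n)" "x \<in> (\<Union>n. A2 n)" using A1(2) A2(2) by simp_all
      then obtain a b where "x \<in> A1 a" "x \<in> A2 b" by blast
      then have "x \<in> C (prod_encode (a, b))" by (simp add: C_def)
      then show "x \<in> (\<Union>j. C j)" by blast
    qed
  qed (use A1(2) in \<open>auto simp: C_def\<close>)
  moreover have "finite (C j \<inter> \<tau>1 \<omega>)" if "\<omega> \<in> space M" for \<omega> j
    by (rule finite_subset[of _ "\<tau>1 \<omega> \<inter> A1 (fst (prod_decode j))"])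
      (use A1(3) that in \<open>auto simp: C_def\<close>)
  moreover have "finite (C j \<inter> \<tau>2 \<omega>)" if "\<omega> \<in> space M" for \<omega> j
    by (rule finite_subset[of _ "\<tau>2 \<omega> \<inter> A2 (snd (prod_decode j))"])
      (use A2(3) that in \<open>auto simp: C_def\<close>)
  ultimately show ?thesis by (rule that)
qed

lemma distr_eq_on_generator:
  assumes M: "finite_measure M" and f: "f \<in> measurable M A" and g: "g \<in> measurable M A"
    and G: "Int_stable G" "G \<subseteq> sets A" "space A \<in> G"
    and eq: "\<And>Z. Z \<in> G \<Longrightarrow> emeasure (distr M A f) Z = emeasure (distr M A g) Z"
  shows "distr M (sigma (space A) G) f = distr M (sigma (space A) G) g"
proof -
  let ?N = "sigma (space A) G"
  have G_Pow: "G \<subseteq> Pow (space A)" using G(2) sets.space_closed by blast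
  have measurable_N: "h \<in> measurable M ?N" if "h \<in> measurable M A" for h
    using that G(2) by (intro measurable_measure_of[OF G_Pow]) (auto simp: measurable_def)
  have emeasure_N: "emeasure (distr M ?N h) Z = emeasure (distr M A h) Z"
    if "h \<in> measurable M A" "Z \<in> G" for h Z
  proof -
    have "Z \<in> sets ?N" using that(2) G_Pow by auto
    then show ?thesis
      using that G(2) by (simp add: emeasure_distr measurable_N subsetD)
  qed
  show ?thesis
  proof (rule measure_eqI_generator_eq[OF G(1) G_Pow, where A = "\<lambda>_. space A"])
    show "sets (distr M ?N f) = sigma_sets (space A) G"
      and "sets (distr M ?N g) = sigma_sets (space A) G"
      using G_Pow by simp_all
    show "emeasure (distr M ?N f) Z = emeasure (distr M ?N g) Z" if "Z \<in> G" for Z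
      using that f g eq by (simp add: emeasure_N)
    show "emeasure (distr M ?N f) (space A) \<noteq> \<infinity>"
      using G(3) f finite_measure.emeasure_finite[OF finite_measure.finite_measure_distr[OF M f]]
      by (simp add: emeasure_N)
  qed (use G(3) in auto)
qed

lemma emeasure_distr_trace:
  assumes f: "f \<in> measurable M A" and N: "sets N \<subseteq> sets A" "space N = space A"
    and into_L: "\<And>\<omega>. \<omega> \<in> space M \<Longrightarrow> f \<omega> \<in> L"
    and Y: "Y \<in> sets A" "Y \<inter> L \<in> sets N"
  shows "emeasure (distr M A f) Y = emeasure (distr M N f) (Y \<inter> L)"
proof -
  have "f \<in> measurable M N" using measurable_mono[OF N(1) N(2)[symmetric]] f by blast
  moreover have "f -` (Y \<inter> L) \<inter> space M = f -` Y \<inter> space M" using into_L by auto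
  ultimately show ?thesis using f Y by (simp add: emeasure_distr)
qed

lemma distr_eq_from_trace:
  assumes f: "f \<in> measurable M A" and g: "g \<in> measurable M A"
    and N: "sets N \<subseteq> sets A" "space N = space A"
    and into_L: "\<And>\<omega>. \<omega> \<in> space M \<Longrightarrow> f \<omega> \<in> L" "\<And>\<omega>. \<omega> \<in> space M \<Longrightarrow> g \<omega> \<in> L"
    and trace: "\<And>Y. Y \<in> sets A \<Longrightarrow> Y \<inter> L \<in> sets N"
    and eq: "distr M N f = distr M N g"
  shows "distr M A f = distr M A g"
proof (rule measure_eqI)
  fix Y assume "Y \<in> sets (distr M A f)"
  then have Y: "Y \<in> sets A" by simp
  have "emeasure (distr M A f) Y = emeasure (distr M N f) (Y \<inter> L)"
    using emeasure_distr_trace[OF f N into_L(1) Y trace[OF Y]] .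
  also have "\<dots> = emeasure (distr M A g) Y"
    using emeasure_distr_trace[OF g N into_L(2) Y trace[OF Y]] eq by simp
  finally show "emeasure (distr M A f) Y = emeasure (distr M A g) Y" .
qed simp

text \<open>The hypothesis of the theorem, restated as agreement of the two laws on
  all cylinders (the empty cylinder, i.e. the whole space, has probability one).\<close>

lemma prob_eq_on_cylinders:
  assumes \<mu>: "prob_space \<mu>1" "prob_space \<mu>2"
    "sets \<mu>1 = sets (cset_measure Sm)" "sets \<mu>2 = sets (cset_measure Sm)"
    and eq: "\<And>(n::nat) (A :: nat \<Rightarrow> 's set) (k :: nat \<Rightarrow> enat).
           n \<ge> 1 \<Longrightarrow> (\<forall>i<n. A i \<in> E) \<Longrightarrow>
           measure \<mu>1 {X \<in> space (cset_measure Sm). \<forall>i<n. cnt (A i) X = k i}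
         = measure \<mu>2 {X \<in> space (cset_measure Sm). \<forall>i<n. cnt (A i) X = k i}"
    and Z: "Z \<in> cylinders Sm E"
  shows "emeasure \<mu>1 Z = emeasure \<mu>2 Z"
proof -
  obtain F where F: "Z = cylinder Sm F" "finite F" "fst ` F \<subseteq> E"
    using Z unfolding cylinders_def by blast
  obtain A k where Ak: "\<forall>i<card F. (A i, k i) \<in> F"
    and cyl: "cylinder Sm F = {X \<in> space (cset_measure Sm). \<forall>i<card F. cnt (A i) X = k i}"
    by (rule cylinder_indexed[OF F(2)])
  show ?thesis
  proof (cases "card F = 0")
    case True
    then have "Z = space (cset_measure Sm)" using F(1) cyl by simp
    then have "Z = space \<mu>1" "Z = space \<mu>2"
      using sets_eq_imp_space_eq[OF \<mu>(3)] sets_eq_imp_space_eq[OF \<mu>(4)] by simp_all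
    then show ?thesis
      using prob_space.emeasure_space_1[OF \<mu>(1)] prob_space.emeasure_space_1[OF \<mu>(2)] by simp
  next
    case False
    have "A i \<in> E" if "i < card F" for i
    proof -
      have "A i \<in> fst ` F" using Ak that by (metis fst_conv image_eqI)
      then show ?thesis using F(3) by blast
    qed
    then have "measure \<mu>1 Z = measure \<mu>2 Z"
      using eq[of "card F" A k] False F(1) cyl by simp
    then show ?thesis
      using finite_measure.emeasure_eq_measure[OF prob_space.finite_measure[OF \<mu>(1)]]
        finite_measure.emeasure_eq_measure[OF prob_space.finite_measure[OF \<mu>(2)]] by metis
  qed
qed

theorem theorem1p1:
  fixes M :: "'w measure" and Sm :: "'s measure" and E :: "'s set set"
    and \<pi>1 \<pi>2 :: "'w \<Rightarrow> 's set"
  assumes "prob_space M"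
    and "E \<subseteq> Pow (space Sm)"
    and "Int_stable E"
    and "sigma_sets (space Sm) E = sets Sm"
    and "cr_set M Sm \<pi>1" and "cr_set M Sm \<pi>2"
    and "sigma_finite_on M (space Sm) E \<pi>1"
    and "sigma_finite_on M (space Sm) E \<pi>2"
    and "\<And>(n::nat) (A :: nat \<Rightarrow> 's set) (k :: nat \<Rightarrow> enat).
           n \<ge> 1 \<Longrightarrow> (\<forall>i<n. A i \<in> E) \<Longrightarrow>
           measure (cr_law M Sm \<pi>1) {X \<in> space (cset_measure Sm). \<forall>i<n. cnt (A i) X = k i}
         = measure (cr_law M Sm \<pi>2) {X \<in> space (cset_measure Sm). \<forall>i<n. cnt (A i) X = k i}"
  shows "cr_law M Sm \<pi>1 = cr_law M Sm \<pi>2"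
proof -
  note M = assms(1) and gen = assms(4) and E = assms(3)
  have \<pi>1: "\<pi>1 \<in> measurable M (cset_measure Sm)" and \<pi>2: "\<pi>2 \<in> measurable M (cset_measure Sm)"
    using assms(5,6) by (simp_all add: cr_set_def)
  have E_sets: "E \<subseteq> sets Sm" using gen sigma_sets.Basic[of _ E "space Sm"] by blast
  obtain C :: "nat \<Rightarrow> 's set" where C: "range C \<subseteq> E" "(\<Union>j. C j) = space Sm"
    and finite: "\<And>\<omega> j. \<omega> \<in> space M \<Longrightarrow> finite (C j \<inter> \<pi>1 \<omega>)"
      "\<And>\<omega> j. \<omega> \<in> space M \<Longrightarrow> finite (C j \<inter> \<pi>2 \<omega>)"
    using sigma_finite_on_common_sequence[OF E assms(7,8)] by blast
  have "distr M (cylinder_measure Sm E) \<pi>1 = distr M (cylinder_measure Sm E) \<pi>2"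
    unfolding cylinder_measure_def
  proof (rule distr_eq_on_generator[OF prob_space.finite_measure[OF M] \<pi>1 \<pi>2])
    fix Z assume "Z \<in> cylinders Sm E"
    then show "emeasure (distr M (cset_measure Sm) \<pi>1) Z = emeasure (distr M (cset_measure Sm) \<pi>2) Z"
      using prob_eq_on_cylinders[OF _ _ _ _ assms(9)[unfolded cr_law_def]]
        prob_space.prob_space_distr[OF M \<pi>1] prob_space.prob_space_distr[OF M \<pi>2] by simp
  qed (simp_all add: cylinders_Int_stable cylinders_measurable[OF E_sets] space_in_cylinders)
  then show ?thesis
    unfolding cr_law_def
  proof (rule distr_eq_from_trace[OF \<pi>1 \<pi>2, rotated -1])
    fix \<omega> assume "\<omega> \<in> space M"
    then show "\<pi>1 \<omega> \<in> locally_finite_sets Sm C" "\<pi>2 \<omega> \<in> locally_finite_sets Sm C"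
      using finite measurable_space[OF \<pi>1] measurable_space[OF \<pi>2]
      by (auto simp: locally_finite_sets_def)
  next
    fix Y assume "Y \<in> sets (cset_measure Sm)"
    then show "Y \<inter> locally_finite_sets Sm C \<in> sets (cylinder_measure Sm E)"
      by (rule trace_on_locally_finite_sets[OF gen E C])
  qed (simp_all add: cylinder_measure_coarser[OF E_sets] space_cylinder_measure)
qed

end
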